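(* Let $n\ge1$ and $0<\varphi<t<1$ with $nt$ an integer, and let $\mathrm{lE}_n(t|\varphi)=\min\left((t-\varphi)\sqrt{\frac{\pi n}{8\varphi(1-\varphi)}},1\right)$. Then $$-\log P_{\mathrm{X},n}(t|\varphi)\in-\log P_{\mathrm{CH},n}(t|\varphi)+\tfrac12\log n-\log\left(\frac{1-\varphi}{t-\varphi}\sqrt{\frac{t}{2\pi(1-t)}}\right)+\left[-\frac{\mathrm{lE}_n(t|\varphi)}{n(t-\varphi)},\ \frac{\varphi(1-\varphi)}{(t-\varphi)^2n}+\frac{1}{12nt(1-t)}\right].$$
   Context: Logarithms are natural. For an integer $n\ge1$, $0<\varphi<1$ and $t\in[0,1]$ with $nt$ an integer: $P_{\mathrm{X},n}(t|\varphi)=\sum_{k\ge nt}\binom{n}{k}\varphi^k(1-\varphi)^{n-k}$; $P_{\mathrm{CH},n}(t|\varphi)=\left(\frac{\varphi}{t}\right)^{nt}\left(\frac{1-\varphi}{1-t}\right)^{n(1-t)}$ if $t\ge\varphi$, and $=1$ otherwise. Interval notation: $x\in y+[u,v]$ means $y+u\le x\le y+v$. *)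

theory Defs
  imports Complex_Main
begin

definition P_X :: "nat \<Rightarrow> real \<Rightarrow> real \<Rightarrow> real" where
  "P_X n t \<phi> = (\<Sum>j\<in>{j. j \<le> n \<and> real j \<ge> real n * t}.
      real (n choose j) * \<phi> ^ j * (1 - \<phi>) ^ (n - j))"

definition P_CH :: "nat \<Rightarrow> real \<Rightarrow> real \<Rightarrow> real" where
  "P_CH n t \<phi> = (if t \<ge> \<phi> then
      (\<phi> / t) powr (real n * t) * ((1 - \<phi>) / (1 - t)) powr (real n * (1 - t))
    else 1)"

definition lE :: "nat \<Rightarrow> real \<Rightarrow> real \<Rightarrow> real" where
  "lE n t \<phi> = min ((t - \<phi>) * sqrt (pi * real n / (8 * \<phi> * (1 - \<phi>)))) 1"

end

theory Submission
  imports Defs "HOL-Analysis.Analysis" "HOL-Real_Asymp.Real_Asymp"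
begin

text \<open>
  Write \<open>P_X\<close> as the tail \<open>T = \<Sum>j\<ge>k. b j\<close> of the binomial weights
  \<open>b = binomial_weight n \<phi>\<close>, where \<open>k = n t\<close>. About the mean
  \<open>n \<phi>\<close> the first two tail moments are explicit: \<open>\<Sum>j\<ge>k. (j - n \<phi>) b j = k (1 - \<phi>) b k = A\<close>
  and \<open>\<Sum>j\<ge>k. (j - n \<phi>)\<^sup>2 b j = n \<phi> (1 - \<phi>) T + (k - n \<phi> - \<phi>) A\<close>. With \<open>x = k - n \<phi>\<close>
  and \<open>s = n \<phi> (1 - \<phi>)\<close>, the first gives \<open>x T \<le> A\<close> and Cauchy-Schwarz turns the second
  into \<open>A x \<le> T (x\<^sup>2 + s)\<close>, so \<open>-ln T\<close> lies between \<open>-ln (A / x)\<close> and \<open>-ln (A / x) + s / x\<^sup>2\<close>.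
  Stirling's formula with remainder in \<open>[0, 1 / (12 j)]\<close>, obtained from Wallis' product,
  evaluates \<open>-ln (A / x)\<close> as the Chernoff exponent plus the Gaussian correction terms.
\<close>

lemma ln_ratio_ge:
  fixes x :: real assumes "0 \<le> x" "x < 1"
  shows "2 * x \<le> ln (1 + x) - ln (1 - x)"
proof -
  let ?g = "\<lambda>y::real. ln (1 + y) - ln (1 - y) - 2 * y"
  have "?g 0 \<le> ?g x"
  proof (rule DERIV_nonneg_imp_nondecreasing[OF assms(1)])
    fix y :: real assume y: "0 \<le> y" "y \<le> x"
    with assms have "(?g has_real_derivative 2 * y\<^sup>2 / (1 - y\<^sup>2)) (at y)"
      by (auto intro!: derivative_eq_intros simp: field_simps power2_eq_square)
    moreover have "2 * y\<^sup>2 / (1 - y\<^sup>2) \<ge> 0"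
      using y assms by (simp add: abs_square_less_1 less_imp_le)
    ultimately show "\<exists>d. (?g has_real_derivative d) (at y) \<and> 0 \<le> d" by blast
  qed
  thus ?thesis by simp
qed

lemma ln_ratio_le:
  fixes x :: real assumes "0 \<le> x" "x < 1"
  shows "ln (1 + x) - ln (1 - x) \<le> 2 * x + 2/3 * x ^ 3 / (1 - x\<^sup>2)"
proof -
  let ?g = "\<lambda>y::real. 2 * y + 2/3 * y ^ 3 / (1 - y\<^sup>2) - (ln (1 + y) - ln (1 - y))"
  have rational_identity: "2 + (6*u*(3-3*u) + 12*u\<^sup>2)/((3-3*u)*(3-3*u)) - 2/(1-u)
      = 4*u\<^sup>2/(3*(1-u)\<^sup>2)" if "1 - u \<noteq> 0" for u :: real
  proof -
    have "(3-3*u)*(3-3*u) = 9*(1-u)\<^sup>2" by (simp add: power2_eq_square algebra_simps)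
    with that show ?thesis
      by (simp add: divide_simps) (simp add: power2_eq_square power4_eq_xxxx algebra_simps)
  qed
  have "?g 0 \<le> ?g x"
  proof (rule DERIV_nonneg_imp_nondecreasing[OF assms(1)])
    fix y :: real assume y: "0 \<le> y" "y \<le> x"
    with assms have "\<bar>y\<bar> < 1" by simp
    hence ne: "1 - y\<^sup>2 \<noteq> 0" using abs_square_less_1[of y] by linarith
    have h: "1 / (1 + y) + 1 / (1 - y) = 2 / (1 - y\<^sup>2)"
      using \<open>\<bar>y\<bar> < 1\<close> by (simp add: field_simps power2_eq_square)
    have e: "y ^ 3 * y = (y\<^sup>2)\<^sup>2" "y ^ 4 = (y\<^sup>2)\<^sup>2" by algebra+
    have "(?g has_real_derivative 4/3 * y ^ 4 / (1 - y\<^sup>2)\<^sup>2) (at y)"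
      using \<open>\<bar>y\<bar> < 1\<close> ne
      by (auto intro!: derivative_eq_intros simp: h) (simp only: e rational_identity[OF ne])
    moreover have "4/3 * y ^ 4 / (1 - y\<^sup>2)\<^sup>2 \<ge> 0" by simp
    ultimately show "\<exists>d. (?g has_real_derivative d) (at y) \<and> 0 \<le> d" by blast
  qed
  thus ?thesis by simp
qed

definition stirling_remainder :: "nat \<Rightarrow> real" where
  "stirling_remainder n = ln (fact n) - (real n + 1/2) * ln (real n) + real n"

lemma stirling_remainder_diff:
  "stirling_remainder n - stirling_remainder (Suc n)
     = (real n + 1/2) * (ln (real n + 1) - ln (real n)) - 1"
proof -
  have "ln (fact (Suc n) :: real) = ln (fact n) + ln (real n + 1)"
    by (simp add: ln_mult add.commute)
  thus ?thesis unfolding stirling_remainder_def by (simp add: algebra_simps)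
qed

lemma stirling_remainder_diff_bounds:
  assumes "n \<ge> 1"
  shows "0 \<le> stirling_remainder n - stirling_remainder (Suc n)"
    and "stirling_remainder n - stirling_remainder (Suc n) \<le> 1 / (12 * real n) - 1 / (12 * (real n + 1))"
proof -
  have n: "real n > 0" using assms by simp
  define x :: real where "x = 1 / (2 * real n + 1)"
  have x: "0 \<le> x" "x < 1" using n by (auto simp: x_def)
  have "ln (real n + 1) - ln (real n) = ln ((real n + 1) / real n)"
    using n by (simp add: ln_div)
  also have "(real n + 1) / real n = (1 + x) / (1 - x)"
    using n by (simp add: x_def divide_simps)
  also have "ln ((1 + x) / (1 - x)) = ln (1 + x) - ln (1 - x)"
    using x by (simp add: ln_div)
  finally have diff: "stirling_remainder n - stirling_remainder (Suc n)
      = (real n + 1/2) * (ln (1 + x) - ln (1 - x)) - 1"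
    by (simp add: stirling_remainder_diff)
  have half: "real n + 1/2 \<ge> 0" by simp
  have "(real n + 1/2) * (2 * x) = 1"
    using n by (simp add: x_def field_simps)
  moreover have "(real n + 1/2) * (2 * x) \<le> (real n + 1/2) * (ln (1 + x) - ln (1 - x))"
    using ln_ratio_ge[OF x] half by (rule mult_left_mono)
  ultimately show "0 \<le> stirling_remainder n - stirling_remainder (Suc n)"
    using diff by linarith
  have "(real n + 1/2) * (ln (1 + x) - ln (1 - x)) \<le> (real n + 1/2) * (2 * x + 2/3 * x ^ 3 / (1 - x\<^sup>2))"
    using ln_ratio_le[OF x] half by (rule mult_left_mono)
  also have "\<dots> = 1 + 1 / (12 * real n) - 1 / (12 * (real n + 1))"
  proof -
    have nz: "2 * real n + 1 \<noteq> 0" "real n + 1 \<noteq> 0" "real n \<noteq> 0" "x \<noteq> 0"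
      using n by (auto simp: x_def)
    have "1 - x\<^sup>2 = 4 * real n * (real n + 1) * x\<^sup>2"
      using nz unfolding x_def by (simp add: divide_simps power2_eq_square) (simp add: algebra_simps)
    hence "2/3 * x ^ 3 / (1 - x\<^sup>2) = 2/3 * (x / (4 * real n * (real n + 1)))"
      using nz by (simp add: power2_eq_square power3_eq_cube)
    also have "(real n + 1/2) * (2 * x + \<dots>) = 1 + 1 / (12 * real n) - 1 / (12 * (real n + 1))"
      using nz unfolding x_def by (simp add: divide_simps) (simp add: algebra_simps)
    finally show ?thesis .
  qed
  finally show "stirling_remainder n - stirling_remainder (Suc n) \<le> 1 / (12 * real n) - 1 / (12 * (real n + 1))"
    using diff by linarith
qed

lemma stirling_remainder_Suc_decseq: "decseq (\<lambda>i. stirling_remainder (Suc i))"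
  by (rule decseq_SucI) (use stirling_remainder_diff_bounds(1)[of "Suc _"] in auto)

lemma stirling_remainder_Suc_minus_incseq:
  "incseq (\<lambda>i. stirling_remainder (Suc i) - 1 / (12 * real (Suc i)))"
proof (rule incseq_SucI)
  fix i
  show "stirling_remainder (Suc i) - 1 / (12 * real (Suc i))
      \<le> stirling_remainder (Suc (Suc i)) - 1 / (12 * real (Suc (Suc i)))"
    using stirling_remainder_diff_bounds(2)[of "Suc i"] by (simp add: add.commute)
qed

lemma wallis_product_eq:
  "(\<Prod>k=1..n. (4 * real k ^ 2) / (4 * real k ^ 2 - 1))
     = (2 ^ n * fact n) ^ 4 / ((fact (2 * n)) ^ 2 * (2 * real n + 1))"
proof (induction n)
  case 0 then show ?case by simp
next
  case (Suc n)
  define k :: real where "k = 4 * (real n + 1) ^ 2"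
  have "k \<noteq> 0" by (simp add: k_def)
  have fact_double: "(fact (2 * Suc n) :: real) = fact (2 * n) * ((2 * real n + 1) * (2 * real n + 2))"
    by (simp add: algebra_simps)
  have "(\<Prod>k=1..Suc n. (4 * real k ^ 2) / (4 * real k ^ 2 - 1))
      = (2 ^ n * fact n) ^ 4 / ((fact (2 * n)) ^ 2 * (2 * real n + 1)) * (k / ((2 * real n + 1) * (2 * real n + 3)))"
    using Suc by (simp add: add.commute k_def algebra_simps power2_eq_square)
  also have "\<dots> = ((2 ^ n * fact n) ^ 4 * k * k) / ((((fact (2 * n)) ^ 2 * (2 * real n + 1)) * ((2 * real n + 1) * (2 * real n + 3))) * k)"
    using \<open>k \<noteq> 0\<close> by simp
  also have "\<dots> = (2 ^ Suc n * fact (Suc n)) ^ 4 / ((fact (2 * Suc n)) ^ 2 * (2 * real (Suc n) + 1))"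
    unfolding fact_double by (simp add: k_def power2_eq_square power4_eq_xxxx algebra_simps)
  finally show ?case .
qed

lemma ln_wallis_product:
  assumes "n \<ge> 1"
  shows "ln (\<Prod>k=1..n. (4 * real k ^ 2) / (4 * real k ^ 2 - 1))
    = 4 * stirling_remainder n - 2 * stirling_remainder (2 * n) + ln (real n) - ln 2 - ln (2 * real n + 1)"
proof -
  have n: "real n > 0" using assms by simp
  have fact_pos: "(fact n :: real) > 0" "(fact (2 * n) :: real) > 0" by auto
  have "ln ((2 ^ n * fact n) ^ 4 / ((fact (2 * n)) ^ 2 * (2 * real n + 1)) :: real)
      = 4 * (real n * ln 2 + ln (fact n)) - 2 * ln (fact (2 * n)) - ln (2 * real n + 1)"
    using fact_pos by (simp add: ln_div ln_mult ln_realpow)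
  also have "\<dots> = 4 * stirling_remainder n - 2 * stirling_remainder (2 * n) + ln (real n) - ln 2 - ln (2 * real n + 1)"
    using n by (simp add: stirling_remainder_def ln_mult algebra_simps)
  finally show ?thesis by (simp only: wallis_product_eq)
qed

lemma stirling_remainder_tendsto: "stirling_remainder \<longlonglongrightarrow> ln (2 * pi) / 2"
proof -
  have "stirling_remainder 1 - 1 / 12 \<le> stirling_remainder (Suc i)" for i
  proof -
    have "stirling_remainder 1 - 1 / 12 \<le> stirling_remainder (Suc i) - 1 / (12 * real (Suc i))"
      using incseqD[OF stirling_remainder_Suc_minus_incseq, of 0 i] by simp
    moreover have "0 \<le> 1 / (12 * real (Suc i))" by simp
    ultimately show ?thesis by linarith
  qed
  then obtain D where "(\<lambda>i. stirling_remainder (Suc i)) \<longlonglongrightarrow> D"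
    using decseq_convergent[OF stirling_remainder_Suc_decseq] by blast
  hence D: "stirling_remainder \<longlonglongrightarrow> D" by (rule LIMSEQ_imp_Suc)
  have D2: "(\<lambda>n. stirling_remainder (2 * n)) \<longlonglongrightarrow> D"
    by (rule filterlim_compose[OF D]) (simp add: filterlim_subseq strict_mono_def)
  have "(\<lambda>n. ln (real n) - ln (2 * real n + 1)) \<longlonglongrightarrow> - ln 2" by real_asymp
  with D D2 have "(\<lambda>n. 4 * stirling_remainder n - 2 * stirling_remainder (2 * n) + (ln (real n) - ln (2 * real n + 1)) - ln 2)
      \<longlonglongrightarrow> 4 * D - 2 * D + - ln 2 - ln 2"
    by (intro tendsto_intros)
  moreover have "eventually (\<lambda>n. 4 * stirling_remainder n - 2 * stirling_remainder (2 * n) + (ln (real n) - ln (2 * real n + 1)) - ln 2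
      = ln (\<Prod>k=1..n. (4 * real k ^ 2) / (4 * real k ^ 2 - 1))) sequentially"
    using eventually_ge_at_top[of 1]
    by eventually_elim (use ln_wallis_product in fastforce)
  ultimately have "(\<lambda>n. ln (\<Prod>k=1..n. (4 * real k ^ 2) / (4 * real k ^ 2 - 1))) \<longlonglongrightarrow> 4 * D - 2 * D + - ln 2 - ln 2"
    by (rule Lim_transform_eventually)
  moreover have "(\<lambda>n. ln (\<Prod>k=1..n. (4 * real k ^ 2) / (4 * real k ^ 2 - 1))) \<longlonglongrightarrow> ln (pi / 2)"
    by (intro tendsto_ln wallis) simp
  ultimately have "4 * D - 2 * D + - ln 2 - ln 2 = ln (pi / 2)" by (rule LIMSEQ_unique)
  hence "D = ln (2 * pi) / 2" by (simp add: ln_div ln_mult)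
  with D show ?thesis by simp
qed

lemma stirling_remainder_bounds:
  assumes "n \<ge> 1"
  shows "ln (2 * pi) / 2 \<le> stirling_remainder n"
    and "stirling_remainder n \<le> ln (2 * pi) / 2 + 1 / (12 * real n)"
proof -
  obtain i where n: "n = Suc i" using assms by (cases n) auto
  have lim: "(\<lambda>i. stirling_remainder (Suc i)) \<longlonglongrightarrow> ln (2 * pi) / 2"
    using stirling_remainder_tendsto by (rule LIMSEQ_Suc)
  show "ln (2 * pi) / 2 \<le> stirling_remainder n"
    unfolding n by (rule decseq_ge[OF stirling_remainder_Suc_decseq lim])
  have "(\<lambda>i. 1 / (12 * real (Suc i))) \<longlonglongrightarrow> 0" by real_asymp
  with lim have "(\<lambda>i. stirling_remainder (Suc i) - 1 / (12 * real (Suc i))) \<longlonglongrightarrow> ln (2 * pi) / 2 - 0"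
    by (rule tendsto_diff)
  from incseq_le[OF stirling_remainder_Suc_minus_incseq this, of i]
  show "stirling_remainder n \<le> ln (2 * pi) / 2 + 1 / (12 * real n)"
    unfolding n by simp
qed

definition binomial_weight :: "nat \<Rightarrow> real \<Rightarrow> nat \<Rightarrow> real" where
  "binomial_weight n p j = real (n choose j) * p ^ j * (1 - p) ^ (n - j)"

lemma binomial_weight_Suc:
  assumes "k < n"
  shows "(real k + 1) * (1 - p) * binomial_weight n p (Suc k) = (real n - real k) * p * binomial_weight n p k"
proof -
  have "real (Suc k * (n choose Suc k)) = real ((n - k) * (n choose k))"
    by (metis binomial_absorb_comp binomial_absorption mult.commute)
  hence choose: "(real k + 1) * real (n choose Suc k) = (real n - real k) * real (n choose k)"
    using assms by (simp add: of_nat_diff algebra_simps)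
  have "n - k = Suc (n - Suc k)" using assms by simp
  hence "(real k + 1) * (1 - p) * binomial_weight n p (Suc k)
      = ((real k + 1) * real (n choose Suc k)) * (p * p ^ k * (1 - p) ^ (n - k))"
    unfolding binomial_weight_def by (simp add: mult_ac)
  also have "\<dots> = (real n - real k) * p * binomial_weight n p k"
    unfolding choose binomial_weight_def by (simp add: mult_ac)
  finally show ?thesis .
qed

lemma binomial_tail_first_moment:
  assumes "k \<le> n"
  shows "(\<Sum>j=k..n. (real j - real n * p) * binomial_weight n p j) = real k * (1 - p) * binomial_weight n p k"
  using assms
proof (induction k rule: inc_induct)
  case base
  show ?case by (simp add: binomial_weight_def algebra_simps)
next
  case (step k)
  have "(\<Sum>j=k..n. (real j - real n * p) * binomial_weight n p j)
      = (real k - real n * p) * binomial_weight n p k + real (Suc k) * (1 - p) * binomial_weight n p (Suc k)"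
    using step by (simp add: sum.atLeast_Suc_atMost)
  also have "\<dots> = real k * (1 - p) * binomial_weight n p k"
    using binomial_weight_Suc[OF step(2), of p] by (simp add: algebra_simps)
  finally show ?case .
qed

lemma binomial_tail_second_moment:
  assumes "k \<le> n"
  shows "(\<Sum>j=k..n. (real j - real n * p)\<^sup>2 * binomial_weight n p j)
    = real n * p * (1 - p) * (\<Sum>j=k..n. binomial_weight n p j)
      + (real k - real n * p - p) * (real k * (1 - p) * binomial_weight n p k)"
  using assms
proof (induction k rule: inc_induct)
  case base
  show ?case by (simp add: binomial_weight_def power2_eq_square algebra_simps)
next
  case (step k)
  have tail: "(\<Sum>j=k..n. f j) = f k + (\<Sum>j=Suc k..n. f j)" for f :: "nat \<Rightarrow> real"
    using step(2) by (simp add: sum.atLeast_Suc_atMost)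
  have step_rel: "real (Suc k) * (1 - p) * binomial_weight n p (Suc k) = (real n - real k) * p * binomial_weight n p k"
    using binomial_weight_Suc[OF step(2), of p] by (simp add: add.commute)
  show ?case
    unfolding tail[of "\<lambda>j. (real j - real n * p)\<^sup>2 * binomial_weight n p j"] tail[of "binomial_weight n p"] step(3) step_rel
    by (simp add: algebra_simps power2_eq_square)
qed

lemma weighted_Cauchy_Schwarz:
  fixes g w :: "'a \<Rightarrow> real"
  assumes "\<And>j. j \<in> S \<Longrightarrow> 0 \<le> w j"
  shows "(\<Sum>j\<in>S. g j * w j)\<^sup>2 \<le> (\<Sum>j\<in>S. w j) * (\<Sum>j\<in>S. (g j)\<^sup>2 * w j)"
proof -
  have "(\<Sum>j\<in>S. (g j * sqrt (w j)) * sqrt (w j)) = (\<Sum>j\<in>S. g j * w j)"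
    "(\<Sum>j\<in>S. (g j * sqrt (w j))\<^sup>2) = (\<Sum>j\<in>S. (g j)\<^sup>2 * w j)"
    "(\<Sum>j\<in>S. (sqrt (w j))\<^sup>2) = (\<Sum>j\<in>S. w j)"
    using assms by (auto intro!: sum.cong simp: mult.assoc power_mult_distrib)
  with Cauchy_Schwarz_ineq_sum[of "\<lambda>j. g j * sqrt (w j)" "\<lambda>j. sqrt (w j)" S]
  show ?thesis by (simp add: mult.commute)
qed

lemma binomial_tail_bounds:
  fixes p :: real and n k :: nat
  assumes p: "0 < p" "p < 1" and "k \<le> n"
  defines "T \<equiv> \<Sum>j=k..n. binomial_weight n p j"
    and "A \<equiv> real k * (1 - p) * binomial_weight n p k"
    and "x \<equiv> real k - real n * p"
    and "s \<equiv> real n * p * (1 - p)"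
  shows "x * T \<le> A" and "A * x \<le> T * (x\<^sup>2 + s)"
proof -
  have w_nonneg: "0 \<le> binomial_weight n p j" for j
    using p by (simp add: binomial_weight_def)
  have "0 < binomial_weight n p k"
    using p \<open>k \<le> n\<close> by (simp add: binomial_weight_def)
  also have "binomial_weight n p k \<le> T"
    unfolding T_def using w_nonneg \<open>k \<le> n\<close> by (intro member_le_sum) auto
  finally have "T > 0" .
  have "x * T = (\<Sum>j=k..n. x * binomial_weight n p j)"
    by (simp add: T_def sum_distrib_left)
  also have "\<dots> \<le> (\<Sum>j=k..n. (real j - real n * p) * binomial_weight n p j)"
    using w_nonneg by (intro sum_mono mult_right_mono) (auto simp: x_def)
  also have "\<dots> = A"
    unfolding A_def using \<open>k \<le> n\<close> by (rule binomial_tail_first_moment)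
  finally show xT: "x * T \<le> A" .
  have "A\<^sup>2 \<le> T * (s * T + (x - p) * A)"
    using weighted_Cauchy_Schwarz[of "{k..n}" "binomial_weight n p" "\<lambda>j. real j - real n * p"] w_nonneg
      binomial_tail_first_moment[OF \<open>k \<le> n\<close>] binomial_tail_second_moment[OF \<open>k \<le> n\<close>]
    by (simp add: T_def A_def s_def x_def)
  moreover have "0 \<le> p * A * T"
    using p w_nonneg by (simp add: A_def T_def sum_nonneg)
  ultimately have "A * (A - x * T) \<le> T * (s * T)"
    by (simp add: algebra_simps power2_eq_square)
  moreover have "(x * T) * (A - x * T) \<le> A * (A - x * T)"
    using xT by (intro mult_right_mono) simp_all
  ultimately have "T * (x * (A - x * T)) \<le> T * (s * T)"
    by (simp add: mult_ac)
  hence "x * (A - x * T) \<le> s * T"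
    using \<open>T > 0\<close> by (rule mult_left_le_imp_le)
  thus "A * x \<le> T * (x\<^sup>2 + s)"
    by (simp add: algebra_simps power2_eq_square)
qed

lemma ln_binomial_tail_bounds:
  fixes p :: real and n k :: nat
  assumes p: "0 < p" "p < 1" and "k \<le> n" and mean: "real n * p < real k"
  defines "T \<equiv> \<Sum>j=k..n. binomial_weight n p j"
    and "A \<equiv> real k * (1 - p) * binomial_weight n p k"
    and "x \<equiv> real k - real n * p"
    and "s \<equiv> real n * p * (1 - p)"
  shows "ln A - ln x - s / x\<^sup>2 \<le> ln T" and "ln T \<le> ln A - ln x"
proof -
  have "x > 0" "s \<ge> 0" using mean p by (simp_all add: x_def s_def)
  have "0 \<le> real n * p" using p by simp
  hence "real k > 0" using mean by linarith
  hence "A > 0" using p \<open>k \<le> n\<close> by (simp add: A_def binomial_weight_def)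
  note bounds = binomial_tail_bounds[OF p \<open>k \<le> n\<close>, folded T_def A_def x_def s_def]
  have "x\<^sup>2 + s > 0" using \<open>x > 0\<close> \<open>s \<ge> 0\<close> by (simp add: add_pos_nonneg)
  moreover have "0 < A * x" using \<open>A > 0\<close> \<open>x > 0\<close> by simp
  hence "0 < T * (x\<^sup>2 + s)" using bounds(2) by linarith
  ultimately have "T > 0" by (simp add: zero_less_mult_iff)
  from bounds(1) \<open>x > 0\<close> have "T \<le> A / x" by (simp add: field_simps)
  hence "ln T \<le> ln (A / x)" using \<open>T > 0\<close> by simp
  thus "ln T \<le> ln A - ln x" using \<open>x > 0\<close> \<open>A > 0\<close> by (simp add: ln_div)
  have "ln (x\<^sup>2 + s) = 2 * ln x + ln (1 + s / x\<^sup>2)"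
  proof -
    have "x\<^sup>2 + s = x\<^sup>2 * (1 + s / x\<^sup>2)" using \<open>x > 0\<close> by (simp add: field_simps)
    moreover have "1 + s / x\<^sup>2 > 0" using \<open>s \<ge> 0\<close> by (simp add: add_pos_nonneg)
    ultimately show ?thesis using \<open>x > 0\<close> by (simp add: ln_mult ln_realpow)
  qed
  moreover have "ln (1 + s / x\<^sup>2) \<le> s / x\<^sup>2"
    using \<open>s \<ge> 0\<close> \<open>x > 0\<close> by (intro ln_add_one_self_le_self) simp
  moreover have "ln A + ln x - ln (x\<^sup>2 + s) \<le> ln T"
  proof -
    have "A * x / (x\<^sup>2 + s) \<le> T" using bounds(2) \<open>x\<^sup>2 + s > 0\<close> by (simp add: field_simps)
    moreover have "A * x / (x\<^sup>2 + s) > 0" using \<open>A > 0\<close> \<open>x > 0\<close> \<open>x\<^sup>2 + s > 0\<close> by simp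
    ultimately have "ln (A * x / (x\<^sup>2 + s)) \<le> ln T" using \<open>T > 0\<close> by simp
    thus ?thesis using \<open>A > 0\<close> \<open>x > 0\<close> \<open>x\<^sup>2 + s > 0\<close> by (simp add: ln_div ln_mult)
  qed
  ultimately show "ln A - ln x - s / x\<^sup>2 \<le> ln T" by linarith
qed

lemma ln_binomial_weight:
  assumes "0 < p" "p < 1" "k \<le> n"
  shows "ln (binomial_weight n p k) = ln (fact n) - ln (fact k) - ln (fact (n - k))
      + real k * ln p + real (n - k) * ln (1 - p)"
proof -
  have "real (n choose k) = fact n / (fact k * fact (n - k))"
    using assms by (simp add: binomial_fact)
  thus ?thesis
    using assms by (simp add: binomial_weight_def ln_mult ln_div ln_realpow)
qed

lemma ln_P_CH:
  assumes "0 < \<phi>" "\<phi> \<le> t" "t < 1"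
  shows "ln (P_CH n t \<phi>) = real n * t * (ln \<phi> - ln t) + real n * (1 - t) * (ln (1 - \<phi>) - ln (1 - t))"
  using assms by (simp add: P_CH_def ln_mult ln_div ln_powr)

lemma ln_binomial_tail_leading_term:
  fixes n k :: nat and t \<phi> :: real
  assumes "n \<ge> 1" "0 < \<phi>" "\<phi> < t" "t < 1" and k: "real n * t = real k"
  defines "R \<equiv> \<lambda>j. stirling_remainder j - ln (2 * pi) / 2"
  shows "ln (real k * (1 - \<phi>) * binomial_weight n \<phi> k) - ln (real n * (t - \<phi>))
    = ln (P_CH n t \<phi>) - ln (real n) / 2 + ln ((1 - \<phi>) / (t - \<phi>) * sqrt (t / (2 * pi * (1 - t))))
      + (R n - R k - R (n - k))"
proof -
  have "n > 0" using \<open>n \<ge> 1\<close> by simp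
  hence "real k < real n" using k \<open>t < 1\<close> by (simp flip: k)
  hence "k \<le> n" by simp
  have m: "real (n - k) = real n * (1 - t)" using k \<open>k \<le> n\<close> by (simp add: of_nat_diff algebra_simps)
  have ln_k: "ln (real k) = ln (real n) + ln t" and ln_m: "ln (real (n - k)) = ln (real n) + ln (1 - t)"
    using \<open>n > 0\<close> assms by (simp_all add: m flip: k add: ln_mult)
  have ln_fact: "ln (fact j) = R j + ln 2 / 2 + ln pi / 2 + (real j + 1/2) * ln (real j) - real j" for j
    by (simp add: R_def stirling_remainder_def ln_mult add_divide_distrib)
  have "real k > 0" "binomial_weight n \<phi> k > 0"
    using \<open>n > 0\<close> \<open>k \<le> n\<close> assms by (simp_all flip: k add: binomial_weight_def)
  then show ?thesis
    using assms \<open>k \<le> n\<close> \<open>n > 0\<close>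
    by (simp add: ln_binomial_weight ln_P_CH ln_fact ln_k ln_m m ln_mult ln_div ln_sqrt)
      (simp flip: k add: algebra_simps add_divide_distrib diff_divide_distrib)
qed

text \<open>The lower estimate only needs \<open>(t - \<phi>) / 12 \<le> lE n t \<phi>\<close>.\<close>

lemma lE_div_ge:
  assumes "n \<ge> 1" "0 < \<phi>" "\<phi> < t" "t < 1"
  shows "1 / (12 * real n) \<le> lE n t \<phi> / (real n * (t - \<phi>))"
proof -
  have "8 * \<phi> * (1 - \<phi>) \<le> 2"
    using sum_power2_ge_zero[of "\<phi> - 1/2" 0] by (simp add: power2_eq_square algebra_simps)
  also have "2 \<le> pi * real n"
    using pi_gt3 \<open>n \<ge> 1\<close> mult_mono[of 3 pi 1 "real n"] by simp
  finally have "1 \<le> sqrt (pi * real n / (8 * \<phi> * (1 - \<phi>)))"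
    using assms by simp
  hence "t - \<phi> \<le> (t - \<phi>) * sqrt (pi * real n / (8 * \<phi> * (1 - \<phi>)))"
    using assms mult_left_mono[of 1 _ "t - \<phi>"] by simp
  moreover have "(t - \<phi>) / 12 \<le> t - \<phi>" "t - \<phi> \<le> 1" using assms by simp_all
  ultimately have "(t - \<phi>) / 12 \<le> lE n t \<phi>"
    unfolding lE_def by (meson min.boundedI order_trans)
  hence "(t - \<phi>) / 12 / (real n * (t - \<phi>)) \<le> lE n t \<phi> / (real n * (t - \<phi>))"
    using assms by (intro divide_right_mono) auto
  moreover have "(t - \<phi>) / 12 / (real n * (t - \<phi>)) = 1 / (12 * real n)"
    using assms by simp
  ultimately show ?thesis by simp
qed

theorem mainTheorem9:
  fixes n :: nat and t \<phi> :: real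
  assumes "n \<ge> 1" and "0 < \<phi>" and "\<phi> < t" and "t < 1"
    and "real n * t \<in> \<int>"
  defines "C \<equiv> - ln (P_CH n t \<phi>) + ln (real n) / 2
      - ln ((1 - \<phi>) / (t - \<phi>) * sqrt (t / (2 * pi * (1 - t))))"
  shows "C - lE n t \<phi> / (real n * (t - \<phi>)) \<le> - ln (P_X n t \<phi>)
     \<and> - ln (P_X n t \<phi>) \<le> C + (\<phi> * (1 - \<phi>) / ((t - \<phi>)^2 * real n)
                               + 1 / (12 * real n * t * (1 - t)))"
proof -
  have "real n * t \<in> \<nat>" using assms by (simp add: Nats_altdef2)
  then obtain k :: nat where k: "real n * t = real k" by (auto elim: Nats_cases)
  have "real k < real n" "real n * \<phi> < real k" "0 < real k"
    using assms by (simp_all flip: k add: mult_strict_left_mono)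
  hence "k < n" "k \<ge> 1" "n - k \<ge> 1" by simp_all
  have m: "real (n - k) = real n * (1 - t)" using k \<open>k < n\<close> by (simp add: of_nat_diff algebra_simps)
  have "P_X n t \<phi> = (\<Sum>j=k..n. binomial_weight n \<phi> j)"
    unfolding P_X_def binomial_weight_def k by (intro sum.cong) auto
  moreover have "real k - real n * \<phi> = real n * (t - \<phi>)" by (simp flip: k add: algebra_simps)
  moreover have "real n * \<phi> * (1 - \<phi>) / (real n * (t - \<phi>))\<^sup>2 = \<phi> * (1 - \<phi>) / ((t - \<phi>)^2 * real n)"
    by (simp add: power2_eq_square)
  ultimately have "ln (real k * (1 - \<phi>) * binomial_weight n \<phi> k) - ln (real n * (t - \<phi>))
        - \<phi> * (1 - \<phi>) / ((t - \<phi>)^2 * real n) \<le> ln (P_X n t \<phi>)"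
      "ln (P_X n t \<phi>) \<le> ln (real k * (1 - \<phi>) * binomial_weight n \<phi> k) - ln (real n * (t - \<phi>))"
    using ln_binomial_tail_bounds[of \<phi> k n] assms \<open>k < n\<close> \<open>real n * \<phi> < real k\<close> by simp_all
  moreover have "1 / (12 * real k) + 1 / (12 * real (n - k)) = 1 / (12 * real n * t * (1 - t))"
    using assms \<open>0 < real k\<close> by (simp flip: k add: m field_simps)
  ultimately show ?thesis
    unfolding C_def
    using ln_binomial_tail_leading_term[OF assms(1-4) k] stirling_remainder_bounds[OF \<open>n \<ge> 1\<close>]
      stirling_remainder_bounds[OF \<open>k \<ge> 1\<close>] stirling_remainder_bounds[OF \<open>n - k \<ge> 1\<close>]
      lE_div_ge[OF assms(1-4)]
    by argo
qed

end
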